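(* Let $\tilde L$ be a minimum-size counterexample. If $x$ is doubly irreducible in $\tilde L$, then $|{\uparrow}x|=\frac{|\tilde L|+1}{2}$.
   Context: For a poset $P$, $x$ upper covers $y$ (and $y$ lower covers $x$) if $y<x$ with nothing strictly between. Join-irreducible: upper covers exactly one element; meet-irreducible: lower covers exactly one element; doubly irreducible: both. For $x\in P$, ${\uparrow}x=\{y\in P: x\le y\}$. A counterexample is a finite lattice $L$ with $|L|>1$ in which every join-irreducible $j$ satisfies $|{\uparrow}j|>|L|/2$; a minimum-size counterexample is a counterexample $\tilde L$ such that no counterexample has fewer elements. *)

theory Defs
  imports Main
begin

definition is_lattice :: "'a set \<Rightarrow> ('a \<Rightarrow> 'a \<Rightarrow> bool) \<Rightarrow> bool" where
  "is_lattice A le \<longleftrightarrow>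
     (\<forall>x\<in>A. le x x) \<and>
     (\<forall>x\<in>A. \<forall>y\<in>A. le x y \<and> le y x \<longrightarrow> x = y) \<and>
     (\<forall>x\<in>A. \<forall>y\<in>A. \<forall>z\<in>A. le x y \<and> le y z \<longrightarrow> le x z) \<and>
     (\<forall>x\<in>A. \<forall>y\<in>A. \<exists>s\<in>A. le x s \<and> le y s \<and> (\<forall>u\<in>A. le x u \<and> le y u \<longrightarrow> le s u)) \<and>
     (\<forall>x\<in>A. \<forall>y\<in>A. \<exists>m\<in>A. le m x \<and> le m y \<and> (\<forall>u\<in>A. le u x \<and> le u y \<longrightarrow> le u m))"

definition covers :: "'a set \<Rightarrow> ('a \<Rightarrow> 'a \<Rightarrow> bool) \<Rightarrow> 'a \<Rightarrow> 'a \<Rightarrow> bool" where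
  "covers A le x y \<longleftrightarrow> x \<in> A \<and> y \<in> A \<and> le y x \<and> y \<noteq> x \<and>
     \<not> (\<exists>z\<in>A. le y z \<and> z \<noteq> y \<and> le z x \<and> z \<noteq> x)"

definition join_irreducible :: "'a set \<Rightarrow> ('a \<Rightarrow> 'a \<Rightarrow> bool) \<Rightarrow> 'a \<Rightarrow> bool" where
  "join_irreducible A le x \<longleftrightarrow> x \<in> A \<and> card {y\<in>A. covers A le x y} = 1"

definition meet_irreducible :: "'a set \<Rightarrow> ('a \<Rightarrow> 'a \<Rightarrow> bool) \<Rightarrow> 'a \<Rightarrow> bool" where
  "meet_irreducible A le x \<longleftrightarrow> x \<in> A \<and> card {y\<in>A. covers A le y x} = 1"

definition doubly_irreducible :: "'a set \<Rightarrow> ('a \<Rightarrow> 'a \<Rightarrow> bool) \<Rightarrow> 'a \<Rightarrow> bool" where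
  "doubly_irreducible A le x \<longleftrightarrow> join_irreducible A le x \<and> meet_irreducible A le x"

definition up_set :: "'a set \<Rightarrow> ('a \<Rightarrow> 'a \<Rightarrow> bool) \<Rightarrow> 'a \<Rightarrow> 'a set" where
  "up_set A le x = {y\<in>A. le x y}"

definition counterexample :: "'a set \<Rightarrow> ('a \<Rightarrow> 'a \<Rightarrow> bool) \<Rightarrow> bool" where
  "counterexample A le \<longleftrightarrow> finite A \<and> is_lattice A le \<and> card A > 1 \<and>
     (\<forall>j. join_irreducible A le j \<longrightarrow> 2 * card (up_set A le j) > card A)"

text \<open>Minimality is tested against all lattices carried by subsets of the same type;
  since the type contains |A| elements, every smaller finite lattice is isomorphic to one of these.\<close>
definition min_counterexample :: "'a set \<Rightarrow> ('a \<Rightarrow> 'a \<Rightarrow> bool) \<Rightarrow> bool" where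
  "min_counterexample A le \<longleftrightarrow> counterexample A le \<and>
     (\<forall>B (le' :: 'a \<Rightarrow> 'a \<Rightarrow> bool). counterexample B le' \<longrightarrow> card A \<le> card B)"

end

theory Submission
  imports Defs
begin

text \<open>Let \<open>x\<close> be doubly irreducible with lower cover \<open>d\<close> and upper cover \<open>u\<close>. No join or
  meet of two other elements can be \<open>x\<close> (two elements below \<open>x\<close> already lie below \<open>d\<close>), so
  \<open>L - {x}\<close> is again a lattice, with at least the two elements \<open>d\<close> and \<open>u\<close>. By minimality it
  has a join-irreducible \<open>j\<close> with \<open>2 |\<up>j| \<le> |L| - 1\<close>. Unless \<open>j\<close> covers \<open>x\<close>, the element \<open>j\<close> is
  join-irreducible in \<open>L\<close> too, and removing \<open>x\<close> shrinks \<open>\<up>j\<close> only when \<open>j < x\<close>, in which case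
  \<open>\<up>x \<subset> \<up>j\<close>; both cases contradict that \<open>L\<close> is a counterexample. Hence \<open>j = u\<close>, and
  \<open>\<up>x = {x} \<union> \<up>u\<close> gives \<open>|L| < 2 |\<up>x| \<le> |L| + 1\<close>.\<close>

lemma covers_dual: "covers L (\<lambda>p q. le q p) a c = covers L le c a"
  unfolding covers_def by auto

lemma join_irreducible_dual:
  "join_irreducible L (\<lambda>p q. le q p) x = meet_irreducible L le x"
  unfolding join_irreducible_def meet_irreducible_def covers_dual[of L le] ..

lemma join_irreducible_iff_ex1:
  "join_irreducible L le x \<longleftrightarrow> x \<in> L \<and> (\<exists>!d. covers L le x d)"
proof -
  have "{y\<in>L. covers L le x y} = {y. covers L le x y}"
    unfolding covers_def by blast
  then show ?thesis
    unfolding join_irreducible_def by (simp add: card_1_singleton_iff Ex1_def set_eq_iff) metis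
qed

lemma meet_irreducible_iff_ex1:
  "meet_irreducible L le x \<longleftrightarrow> x \<in> L \<and> (\<exists>!u. covers L le u x)"
  using join_irreducible_iff_ex1[of L "\<lambda>p q. le q p" x]
  unfolding join_irreducible_dual covers_dual[of L le] .

lemma up_set_Diff: "up_set (L - {x}) le j = up_set L le j - {x}"
  unfolding up_set_def by blast

locale finite_poset =
  fixes L :: "'a set" and le :: "'a \<Rightarrow> 'a \<Rightarrow> bool"
  assumes finite: "finite L"
    and refl: "x \<in> L \<Longrightarrow> le x x"
    and antisym: "x \<in> L \<Longrightarrow> y \<in> L \<Longrightarrow> le x y \<Longrightarrow> le y x \<Longrightarrow> x = y"
    and trans: "x \<in> L \<Longrightarrow> y \<in> L \<Longrightarrow> z \<in> L \<Longrightarrow> le x y \<Longrightarrow> le y z \<Longrightarrow> le x z"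
begin

lemma finite_poset_dual: "finite_poset L (\<lambda>p q. le q p)"
  by unfold_locales (auto intro: finite refl antisym trans)

lemma lower_cover_between:
  assumes "a \<in> L" "y \<in> L" "le a y" "a \<noteq> y"
  shows "\<exists>c. covers L le y c \<and> le a c"
proof -
  define S where "S = {z\<in>L. le a z \<and> le z y \<and> z \<noteq> y}"
  have "a \<in> S" using assms refl unfolding S_def by auto
  \<comment> \<open>an element of \<open>S\<close> with the fewest elements above it is a maximal one\<close>
  then obtain c where cS: "c \<in> S"
    and c_min: "\<And>z. z \<in> S \<Longrightarrow> card (up_set L le c) \<le> card (up_set L le z)"
    using ex_has_least_nat[of "\<lambda>z. z \<in> S" a "\<lambda>z. card (up_set L le z)"] by blast
  have "\<not> (\<exists>z\<in>L. le c z \<and> z \<noteq> c \<and> le z y \<and> z \<noteq> y)"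
  proof
    assume "\<exists>z\<in>L. le c z \<and> z \<noteq> c \<and> le z y \<and> z \<noteq> y"
    then obtain z where z: "z \<in> L" "le c z" "z \<noteq> c" "le z y" "z \<noteq> y" by blast
    have "z \<in> S" using z cS assms trans unfolding S_def by blast
    have "up_set L le z \<subset> up_set L le c"
      using z cS refl trans antisym unfolding S_def up_set_def by blast
    then have "card (up_set L le z) < card (up_set L le c)"
      using finite by (intro psubset_card_mono) (auto simp: up_set_def)
    with c_min[OF \<open>z \<in> S\<close>] show False by simp
  qed
  with cS assms show ?thesis unfolding S_def covers_def by blast
qed

lemma le_lower_cover_of_join_irreducible:
  assumes "join_irreducible L le x" "covers L le x d" "a \<in> L" "le a x" "a \<noteq> x"
  shows "le a d"
proof -
  obtain c where "covers L le x c" "le a c"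
    using lower_cover_between[of a x] assms unfolding join_irreducible_def by blast
  moreover have "c = d"
    using assms(1,2) \<open>covers L le x c\<close> unfolding join_irreducible_iff_ex1 by blast
  ultimately show ?thesis by simp
qed

lemma join_irreducible_Diff_has_joins:
  assumes "join_irreducible L le x"
    and joins: "\<forall>a\<in>L. \<forall>b\<in>L. \<exists>s\<in>L. le a s \<and> le b s \<and> (\<forall>v\<in>L. le a v \<and> le b v \<longrightarrow> le s v)"
  shows "\<forall>a\<in>L-{x}. \<forall>b\<in>L-{x}. \<exists>s\<in>L-{x}. le a s \<and> le b s \<and> (\<forall>v\<in>L-{x}. le a v \<and> le b v \<longrightarrow> le s v)"
proof (intro ballI)
  fix a b assume a: "a \<in> L - {x}" and b: "b \<in> L - {x}"
  obtain s where s: "s \<in> L" "le a s" "le b s" "\<forall>v\<in>L. le a v \<and> le b v \<longrightarrow> le s v"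
    using joins a b by blast
  obtain d where d: "covers L le x d"
    using assms(1) unfolding join_irreducible_iff_ex1 by blast
  have "s \<noteq> x"
  proof
    assume "s = x"
    then have "le a d" "le b d"
      using le_lower_cover_of_join_irreducible[OF assms(1) d] a b s by auto
    then have "le x d" using s \<open>s = x\<close> d unfolding covers_def by blast
    then show False using d antisym unfolding covers_def by blast
  qed
  then show "\<exists>s\<in>L-{x}. le a s \<and> le b s \<and> (\<forall>v\<in>L-{x}. le a v \<and> le b v \<longrightarrow> le s v)"
    using s by blast
qed

lemma up_set_meet_irreducible:
  assumes "meet_irreducible L le x" "covers L le u x"
  shows "up_set L le x = insert x (up_set L le u)"
proof -
  interpret dual: finite_poset L "\<lambda>p q. le q p" by (rule finite_poset_dual)
  have above: "le u z" if "z \<in> L" "le x z" "z \<noteq> x" for z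
    using dual.le_lower_cover_of_join_irreducible[of x u z] assms that
    unfolding join_irreducible_dual covers_dual[of L le] by blast
  have u: "x \<in> L" "u \<in> L" "le x u"
    using assms(2) unfolding covers_def by blast+
  show ?thesis
  proof (intro set_eqI iffI)
    fix z assume "z \<in> up_set L le x"
    then show "z \<in> insert x (up_set L le u)" using above unfolding up_set_def by blast
  next
    fix z assume "z \<in> insert x (up_set L le u)"
    then show "z \<in> up_set L le x" using u trans[of x u z] by (auto simp: up_set_def intro: refl)
  qed
qed

lemma covers_Diff_iff:
  assumes "j \<in> L - {x}" "y \<in> L - {x}" "\<not> covers L le j x"
  shows "covers (L - {x}) le j y \<longleftrightarrow> covers L le j y"
proof
  assume cov: "covers (L - {x}) le j y"
  show "covers L le j y"
  proof (rule ccontr)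
    assume "\<not> covers L le j y"
    \<comment> \<open>then \<open>x\<close> is the only element strictly between \<open>y\<close> and \<open>j\<close>, so \<open>j\<close> covers \<open>x\<close>\<close>
    then obtain z where "z \<in> L" "le y z" "z \<noteq> y" "le z j" "z \<noteq> j"
      using cov assms(1,2) unfolding covers_def by blast
    moreover have "z = x" using calculation cov unfolding covers_def by blast
    ultimately have "le y x" "x \<noteq> y" "le x j" "x \<noteq> j" "x \<in> L" by blast+
    moreover have "\<not> (\<exists>w\<in>L. le x w \<and> w \<noteq> x \<and> le w j \<and> w \<noteq> j)"
    proof
      assume "\<exists>w\<in>L. le x w \<and> w \<noteq> x \<and> le w j \<and> w \<noteq> j"
      then obtain w where w: "w \<in> L" "le x w" "w \<noteq> x" "le w j" "w \<noteq> j" by blast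
      have "le y w" "w \<noteq> y"
        using trans antisym w assms(2) \<open>le y x\<close> \<open>x \<noteq> y\<close> \<open>x \<in> L\<close> by blast+
      then show False using cov w unfolding covers_def by blast
    qed
    ultimately show False using assms(1,3) unfolding covers_def by blast
  qed
qed (use assms in \<open>auto simp: covers_def\<close>)

lemma join_irreducible_of_Diff:
  assumes "join_irreducible (L - {x}) le j" "\<not> covers L le j x"
  shows "join_irreducible L le j"
proof -
  have j: "j \<in> L - {x}" using assms(1) unfolding join_irreducible_def by blast
  have "{y \<in> L - {x}. covers (L - {x}) le j y} = {y\<in>L. covers L le j y}"
  proof (rule set_eqI)
    fix y
    show "y \<in> {y \<in> L - {x}. covers (L - {x}) le j y} \<longleftrightarrow> y \<in> {y\<in>L. covers L le j y}"
      using covers_Diff_iff[OF j, of y] assms(2) by (cases "y = x") auto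
  qed
  then show ?thesis using assms(1) unfolding join_irreducible_def by auto
qed

lemma card_up_set_Diff_ge:
  assumes "x \<in> L" "j \<in> L - {x}"
  shows "min (card (up_set L le j)) (card (up_set L le x)) \<le> card (up_set (L - {x}) le j)"
proof (cases "le j x")
  case True
  \<comment> \<open>removing \<open>x\<close> from \<open>\<up>j\<close> costs as much as removing \<open>j\<close>, and \<open>\<up>x \<subseteq> \<up>j - {j}\<close>\<close>
  have fin: "finite (up_set L le j)" using finite unfolding up_set_def by simp
  have "up_set L le x \<subseteq> up_set L le j - {j}"
    using True assms trans antisym unfolding up_set_def by blast
  then have "card (up_set L le x) \<le> card (up_set L le j - {j})"
    using fin by (simp add: card_mono)
  also have "\<dots> = card (up_set L le j - {x})"
    using True assms refl fin by (simp add: up_set_def)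
  finally show ?thesis unfolding up_set_Diff by simp
next
  case False
  then have "up_set L le j - {x} = up_set L le j" unfolding up_set_def by blast
  then show ?thesis unfolding up_set_Diff by simp
qed

lemma one_less_card_Diff_doubly_irreducible:
  assumes "doubly_irreducible L le x"
  shows "1 < card (L - {x})"
proof -
  obtain d u where d: "covers L le x d" and u: "covers L le u x"
    using assms unfolding doubly_irreducible_def join_irreducible_iff_ex1 meet_irreducible_iff_ex1
    by blast
  then have "d \<noteq> u" using antisym unfolding covers_def by blast
  moreover have "{d, u} \<subseteq> L - {x}" using d u unfolding covers_def by blast
  ultimately show ?thesis using finite card_mono[of "L - {x}" "{d, u}"] by simp
qed

end

lemma finite_poset_if_lattice:
  assumes "finite L" "is_lattice L le"
  shows "finite_poset L le"
proof -
  have "(\<forall>x\<in>L. le x x) \<and>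
      (\<forall>x\<in>L. \<forall>y\<in>L. le x y \<and> le y x \<longrightarrow> x = y) \<and>
      (\<forall>x\<in>L. \<forall>y\<in>L. \<forall>z\<in>L. le x y \<and> le y z \<longrightarrow> le x z)"
    using assms(2) unfolding is_lattice_def by (elim conjE) (intro conjI)
  with assms(1) show ?thesis by unfold_locales blast+
qed

lemma is_lattice_Diff_doubly_irreducible:
  assumes "finite L" "is_lattice L le" "doubly_irreducible L le x"
  shows "is_lattice (L - {x}) le"
proof -
  interpret finite_poset L le using assms(1,2) by (rule finite_poset_if_lattice)
  interpret dual: finite_poset L "\<lambda>p q. le q p" by (rule finite_poset_dual)
  have "\<forall>a\<in>L-{x}. \<forall>b\<in>L-{x}. \<exists>s\<in>L-{x}. le a s \<and> le b s \<and> (\<forall>v\<in>L-{x}. le a v \<and> le b v \<longrightarrow> le s v)"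
    using assms(2,3) unfolding doubly_irreducible_def is_lattice_def
    by (intro join_irreducible_Diff_has_joins) blast+
  moreover have "\<forall>a\<in>L-{x}. \<forall>b\<in>L-{x}. \<exists>s\<in>L-{x}. le s a \<and> le s b \<and> (\<forall>v\<in>L-{x}. le v a \<and> le v b \<longrightarrow> le v s)"
    using assms(2,3) unfolding doubly_irreducible_def is_lattice_def
    by (intro dual.join_irreducible_Diff_has_joins[unfolded join_irreducible_dual]) blast+
  ultimately show ?thesis using assms(2) unfolding is_lattice_def by blast
qed

lemma min_counterexample_Diff_has_small_join_irreducible:
  assumes "min_counterexample L le" "doubly_irreducible L le x"
  shows "\<exists>j. join_irreducible (L - {x}) le j \<and> 2 * card (up_set (L - {x}) le j) \<le> card L - 1"
proof -
  have fin: "finite L" and lat: "is_lattice L le" and nontrivial: "1 < card L"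
    and minimal: "\<And>le'. counterexample (L - {x}) le' \<Longrightarrow> card L \<le> card (L - {x})"
    using assms(1) unfolding min_counterexample_def counterexample_def by blast+
  interpret finite_poset L le using fin lat by (rule finite_poset_if_lattice)
  have card_Diff: "card (L - {x}) = card L - 1"
    using fin assms(2) unfolding doubly_irreducible_def join_irreducible_def by simp
  have "\<not> counterexample (L - {x}) le"
    using minimal[of le] card_Diff nontrivial by linarith
  moreover have "is_lattice (L - {x}) le" "1 < card (L - {x})"
    using is_lattice_Diff_doubly_irreducible[OF fin lat assms(2)]
      one_less_card_Diff_doubly_irreducible[OF assms(2)] .
  ultimately show ?thesis
    using fin card_Diff unfolding counterexample_def by (simp add: not_less)
qed

theorem lemma2p5:
  fixes L :: "'a set" and le :: "'a \<Rightarrow> 'a \<Rightarrow> bool" and x :: 'a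
  assumes "min_counterexample L le"
    and "doubly_irreducible L le x"
  shows "2 * card (up_set L le x) = card L + 1"
proof -
  have fin: "finite L" and lat: "is_lattice L le" and nontrivial: "1 < card L"
    and big: "\<And>j. join_irreducible L le j \<Longrightarrow> card L < 2 * card (up_set L le j)"
    using assms(1) unfolding min_counterexample_def counterexample_def by blast+
  interpret finite_poset L le using fin lat by (rule finite_poset_if_lattice)
  have x: "join_irreducible L le x" "meet_irreducible L le x" "x \<in> L"
    using assms(2) unfolding doubly_irreducible_def join_irreducible_def by blast+
  obtain j where j: "join_irreducible (L - {x}) le j"
    and small: "2 * card (up_set (L - {x}) le j) \<le> card L - 1"
    using min_counterexample_Diff_has_small_join_irreducible[OF assms] by blast
  have "covers L le j x"
  proof (rule ccontr)
    assume "\<not> covers L le j x"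
    with j have "join_irreducible L le j" by (rule join_irreducible_of_Diff)
    moreover have "j \<in> L - {x}" using j unfolding join_irreducible_def by blast
    ultimately show False
      using big[OF x(1)] big[of j] card_up_set_Diff_ge[OF x(3)] small by fastforce
  qed
  then have "up_set L le x = insert x (up_set (L - {x}) le j)"
    using up_set_meet_irreducible[OF x(2)] unfolding up_set_Diff by blast
  moreover have "finite (up_set (L - {x}) le j)" using fin unfolding up_set_def by simp
  ultimately have "card (up_set L le x) = card (up_set (L - {x}) le j) + 1"
    unfolding up_set_def by simp
  then show ?thesis using big[OF x(1)] small nontrivial by linarith
qed

end
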